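(* Let $k,n,h$ be positive integers with $k\leqslant n$ and $h\geqslant 3$, and let $C=(C_1,\ldots,C_h)$ be a tuple of pairwise distinct elements of $[n]^k_<$ which is a shelling order. If $|C_{h-1}\cap C_h|<k-1$, then $(C_1,\ldots,C_{h-2},C_h,C_{h-1})$ is a shelling order.
   Context: $[n]:=\{1,\ldots,n\}$; $[n]^k_<$ denotes the set of $k$-element subsets of $[n]$. A tuple $C=(C_1,\ldots,C_h)$ of pairwise distinct elements of $[n]^k_<$ is a shelling order if for all $i<j$ in $[h]$ there exists $z<j$ with $|C_z\cap C_j|=k-1$ and $C_i\cap C_j\subseteq C_z\cap C_j$. *)

theory Defs
  imports Main
begin

definition ksubsets :: "nat \<Rightarrow> nat \<Rightarrow> nat set set" where
  "ksubsets n k = {A. A \<subseteq> {1..n} \<and> card A = k}"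

text \<open>A tuple (C_1,...,C_h) is represented by a list C of length h, with C_i = C ! (i-1).\<close>
definition shelling_order :: "nat \<Rightarrow> nat \<Rightarrow> nat set list \<Rightarrow> bool" where
  "shelling_order n k C \<longleftrightarrow>
     distinct C \<and> set C \<subseteq> ksubsets n k \<and>
     (\<forall>j < length C. \<forall>i < j. \<exists>z < j.
        card (C ! z \<inter> C ! j) = k - 1 \<and> C ! i \<inter> C ! j \<subseteq> C ! z \<inter> C ! j)"

end

theory Submission
  imports Defs
begin

text \<open>Appending the sets C_{h-1}, C_h to a shelling order C_1, ..., C_{h-2} amounts to asking that
  each of them be shellable onto the sets before it. If C_{h-1} and C_h are not adjacent
  (|C_{h-1} \<inter> C_h| < k - 1), then C_{h-1} never serves as a witness for C_h, so C_h is already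
  shellable onto C_1, ..., C_{h-2}; in particular C_{h-1} \<inter> C_h \<subseteq> C_z \<inter> C_h for some z \<le> h - 2.
  Consequently C_h \<inter> C_{h-1} \<subseteq> C_z \<inter> C_{h-1}, and the witness that shells C_z onto C_{h-1}
  also serves for C_h, so C_{h-1} may be placed after C_h.\<close>

definition shells_onto :: "nat \<Rightarrow> nat set set \<Rightarrow> nat set \<Rightarrow> bool" where
  "shells_onto k S A \<longleftrightarrow> (\<forall>B\<in>S. \<exists>Z\<in>S. card (Z \<inter> A) = k - 1 \<and> B \<inter> A \<subseteq> Z \<inter> A)"

lemma shells_onto_iff_nth:
  "shells_onto k (set P) A \<longleftrightarrow>
     (\<forall>i < length P. \<exists>z < length P. card (P ! z \<inter> A) = k - 1 \<and> P ! i \<inter> A \<subseteq> P ! z \<inter> A)"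
  unfolding shells_onto_def by (metis in_set_conv_nth)

lemma shelling_order_snoc:
  "shelling_order n k (P @ [A]) \<longleftrightarrow>
     shelling_order n k P \<and> A \<notin> set P \<and> A \<in> ksubsets n k \<and> shells_onto k (set P) A"
proof -
  let ?Q = "P @ [A]"
  have prefix: "(\<forall>i < j. \<exists>z < j. card (?Q ! z \<inter> ?Q ! j) = k - 1 \<and> ?Q ! i \<inter> ?Q ! j \<subseteq> ?Q ! z \<inter> ?Q ! j)
      \<longleftrightarrow> (\<forall>i < j. \<exists>z < j. card (P ! z \<inter> P ! j) = k - 1 \<and> P ! i \<inter> P ! j \<subseteq> P ! z \<inter> P ! j)"
    if "j < length P" for j
    using that by (auto simp: nth_append) (meson less_trans)+
  have last: "(\<forall>i < length P. \<exists>z < length P. card (?Q ! z \<inter> ?Q ! length P) = k - 1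
        \<and> ?Q ! i \<inter> ?Q ! length P \<subseteq> ?Q ! z \<inter> ?Q ! length P) \<longleftrightarrow> shells_onto k (set P) A"
    unfolding shells_onto_iff_nth by (auto simp: nth_append)
  show ?thesis
    unfolding shelling_order_def using prefix last
    by (auto simp: less_Suc_eq)
qed

lemma shells_onto_insert_nonadjacent:
  assumes "shells_onto k (insert X S) Y" and "card (X \<inter> Y) \<noteq> k - 1" and "B \<in> insert X S"
  shows "\<exists>Z\<in>S. card (Z \<inter> Y) = k - 1 \<and> B \<inter> Y \<subseteq> Z \<inter> Y"
  using assms unfolding shells_onto_def by blast

lemma shells_onto_insert_dominated:
  assumes "shells_onto k S X" and "Z \<in> S" and "Y \<inter> X \<subseteq> Z \<inter> X"
  shows "shells_onto k (insert Y S) X"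
  using assms unfolding shells_onto_def by (metis insert_iff subset_trans)

lemma shelling_order_swap_last:
  assumes "shelling_order n k (P @ [X, Y])" and "card (X \<inter> Y) \<noteq> k - 1"
  shows "shelling_order n k (P @ [Y, X])"
proof -
  have P: "shelling_order n k P" "X \<notin> set P" "Y \<notin> set P" "X \<noteq> Y"
    and X: "X \<in> ksubsets n k" "shells_onto k (set P) X"
    and Y: "Y \<in> ksubsets n k" "shells_onto k (insert X (set P)) Y"
    using assms(1) shelling_order_snoc[of n k "P @ [X]" Y] shelling_order_snoc[of n k P X]
    by auto
  have "shells_onto k (set P) Y"
    using shells_onto_insert_nonadjacent[OF Y(2) assms(2)] unfolding shells_onto_def by blast
  moreover obtain Z where "Z \<in> set P" "X \<inter> Y \<subseteq> Z \<inter> Y"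
    using shells_onto_insert_nonadjacent[OF Y(2) assms(2), of X] by blast
  then have "shells_onto k (insert Y (set P)) X"
    by (intro shells_onto_insert_dominated[OF X(2)]) auto
  ultimately show ?thesis
    using P X Y shelling_order_snoc[of n k "P @ [Y]" X] shelling_order_snoc[of n k P Y]
    by auto
qed

theorem proposition5p3:
  fixes n k h :: nat and C :: "nat set list"
  assumes "0 < k" and "k \<le> n" and "3 \<le> h"
    and "length C = h"
    and "distinct C" and "set C \<subseteq> ksubsets n k"
    and "shelling_order n k C"
    and "card (C ! (h - 2) \<inter> C ! (h - 1)) < k - 1"
  shows "shelling_order n k (take (h - 2) C @ [C ! (h - 1), C ! (h - 2)])"
proof -
  have "h = Suc (Suc (h - 2))"
    using assms(3) by arith
  then obtain m where h: "h = Suc (Suc m)"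
    by blast
  have "Suc m < length C"
    using assms(4) h by simp
  then have "take (Suc (Suc m)) C = take m C @ [C ! m, C ! Suc m]"
    by (simp add: take_Suc_conv_app_nth Suc_lessD)
  moreover have "take (Suc (Suc m)) C = C"
    using assms(4) h by simp
  ultimately have "shelling_order n k (take m C @ [C ! m, C ! Suc m])"
    using assms(7) by simp
  moreover have "card (C ! m \<inter> C ! Suc m) \<noteq> k - 1"
    using assms(8) h by simp
  ultimately show ?thesis
    using shelling_order_swap_last h by simp
qed

end
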